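(* Let $p$ be a prime, $r\geq 0$ an integer, and $n\geq \sum_{k=1}^r p^k$ an integer. Then \[ B_{n-\sum_{k=1}^r p^k}\equiv B_{n,-r}\pmod p. \]
   Context: $B_n$ is the $n$-th Bell number. For any integer $s$, the $s$-Bell numbers are defined by $\sum_{n\geq0}B_{n,s}\frac{t^n}{n!}=e^{e^t-1+st}$. *)

theory Defs
  imports "HOL-Combinatorics.Stirling" "HOL-Computational_Algebra.Formal_Power_Series"
    "HOL-Computational_Algebra.Primes"
begin

definition bell :: "nat \<Rightarrow> nat" where
  "bell n = (\<Sum>k\<le>n. Stirling n k)"

definition sbell :: "nat \<Rightarrow> int \<Rightarrow> rat" where
  "sbell n s = fact n * fps_nth ((fps_exp (1::rat)) oo (fps_exp 1 - 1 + fps_const (of_int s) * fps_X)) n"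

end

theory Submission
  imports Defs "HOL-Number_Theory.Residues" "HOL-Computational_Algebra.Polynomial"
begin

text \<open>
  Let L be the linear functional on \<open>\<int>[x]\<close> with L(x^i) = B_i. The Bell recurrence says
  L(x f(x)) = L(f(x+1)), hence L(x(x-1)...(x-m+1) f(x)) = L(f(x+m)), and the exponential
  generating function gives B_{n,s} = L((x+s)^n).
  Call f and g congruent if L(h f) = L(h g) mod p for every h; this is compatible with sums,
  products and substitutions x := x+c. By Fermat's little theorem x(x-1)...(x-p+1) agrees
  with x^p - x coefficientwise mod p, and it is congruent to 1 because L(h(x+p)) = L(h(x))
  mod p; this gives Touchard's congruence x^p = x+1. Iterating it with S = p + ... + p^r,
  (x-r)^S is congruent to (x-r+1)(x-r+2)...x, so B_{n,-r} = L((x-r)^(n-S) (x-r)^S) is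
  congruent mod p to L((x-r)^(n-S) x(x-1)...(x-r+1)) = L(x^(n-S)) = B_{n-S}.
\<close>

lemma sum_binomial_Suc_split:
  fixes f :: "nat \<Rightarrow> 'a::comm_semiring_1"
  shows "(\<Sum>j\<le>Suc n. of_nat (Suc n choose j) * f j) =
         (\<Sum>j\<le>n. of_nat (n choose j) * f j) + (\<Sum>j\<le>n. of_nat (n choose j) * f (Suc j))"
proof -
  have "(\<Sum>j\<le>Suc n. of_nat (Suc n choose j) * f j) =
        f 0 + (\<Sum>j\<le>n. of_nat (n choose Suc j) * f (Suc j)) + (\<Sum>j\<le>n. of_nat (n choose j) * f (Suc j))"
    by (subst sum.atMost_Suc_shift) (simp add: sum.distrib algebra_simps)
  also have "f 0 + (\<Sum>j\<le>n. of_nat (n choose Suc j) * f (Suc j)) = (\<Sum>j\<le>Suc n. of_nat (n choose j) * f j)"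
    by (subst sum.atMost_Suc_shift) simp
  also have "\<dots> = (\<Sum>j\<le>n. of_nat (n choose j) * f j)"
    by (simp add: binomial_eq_0)
  finally show ?thesis .
qed

lemma Stirling_Suc_Suc_sum: "Stirling (Suc n) (Suc k) = (\<Sum>j\<le>n. (n choose j) * Stirling j k)"
proof (induction n arbitrary: k)
  case 0
  then show ?case by (cases k) auto
next
  case (Suc n)
  have split: "(\<Sum>j\<le>Suc n. (Suc n choose j) * Stirling j k) =
     (\<Sum>j\<le>n. (n choose j) * Stirling j k) + (\<Sum>j\<le>n. (n choose j) * Stirling (Suc j) k)"
    using sum_binomial_Suc_split[of n "\<lambda>j. Stirling j k"] by simp
  show ?case
  proof (cases k)
    case 0
    then show ?thesis using split Suc.IH[of 0] by simp
  next
    case (Suc k')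
    have "(\<Sum>j\<le>n. (n choose j) * Stirling (Suc j) k) =
       k * (\<Sum>j\<le>n. (n choose j) * Stirling j k) + (\<Sum>j\<le>n. (n choose j) * Stirling j k')"
      by (simp add: Suc sum_distrib_left sum.distrib algebra_simps)
    then show ?thesis using split Suc.IH[of k] Suc.IH[of k'] Suc by simp
  qed
qed

lemma bell_Suc: "bell (Suc n) = (\<Sum>k\<le>n. (n choose k) * bell k)"
proof -
  have "bell (Suc n) = (\<Sum>k\<le>n. Stirling (Suc n) (Suc k))"
    unfolding bell_def by (subst sum.atMost_Suc_shift) simp
  also have "\<dots> = (\<Sum>k\<le>n. \<Sum>j\<le>n. (n choose j) * Stirling j k)"
    by (simp only: Stirling_Suc_Suc_sum)
  also have "\<dots> = (\<Sum>j\<le>n. (n choose j) * (\<Sum>k\<le>n. Stirling j k))"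
    by (subst sum.swap) (simp add: sum_distrib_left)
  also have "\<dots> = (\<Sum>j\<le>n. (n choose j) * bell j)"
  proof (intro sum.cong refl)
    fix j assume "j \<in> {..n}"
    then have "(\<Sum>k\<le>n. Stirling j k) = (\<Sum>k\<le>j. Stirling j k)"
      by (intro sum.mono_neutral_right) auto
    then show "(n choose j) * (\<Sum>k\<le>n. Stirling j k) = (n choose j) * bell j"
      by (simp add: bell_def)
  qed
  finally show ?thesis .
qed

unbundle fps_syntax

definition sbell_egf :: "int \<Rightarrow> rat fps" where
  "sbell_egf s = fps_exp 1 oo (fps_exp 1 - 1 + fps_const (of_int s) * fps_X)"

lemma sbell_eq_egf_nth: "sbell n s = fact n * fps_nth (sbell_egf s) n"
  by (simp add: sbell_def sbell_egf_def)

lemma fps_deriv_sbell_egf: "fps_deriv (sbell_egf s) = sbell_egf s * (fps_exp 1 + fps_const (of_int s))"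
  unfolding sbell_egf_def by (subst fps_compose_deriv) simp_all

lemma sbell_0: "sbell 0 s = 1"
  by (simp add: sbell_def)

lemma sbell_Suc: "sbell (Suc n) s = (\<Sum>k\<le>n. of_nat (n choose k) * sbell k s) + of_int s * sbell n s"
proof -
  define G where "G = sbell_egf s"
  have "of_nat (Suc n) * G $ Suc n = fps_deriv G $ n"
    by simp
  also have "\<dots> = (\<Sum>i\<le>n. G $ i / fact (n - i)) + of_int s * G $ n"
    by (simp add: G_def fps_deriv_sbell_egf distrib_left fps_mult_nth[of _ "fps_exp 1"] atLeast0AtMost
        fps_mult_right_const_nth)
  finally have coeff_eq: "of_nat (Suc n) * G $ Suc n = (\<Sum>i\<le>n. G $ i / fact (n - i)) + of_int s * G $ n" .
  have "sbell (Suc n) s = fact n * (of_nat (Suc n) * G $ Suc n)"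
    by (simp add: sbell_eq_egf_nth G_def)
  also have "\<dots> = (\<Sum>i\<le>n. fact n / fact (n - i) * G $ i) + of_int s * (fact n * G $ n)"
    unfolding coeff_eq by (simp add: sum_distrib_left algebra_simps)
  also have "(\<Sum>i\<le>n. fact n / fact (n - i) * G $ i) = (\<Sum>k\<le>n. of_nat (n choose k) * sbell k s)"
    by (intro sum.cong refl) (simp add: sbell_eq_egf_nth G_def binomial_fact)
  finally show ?thesis
    by (simp add: sbell_eq_egf_nth G_def)
qed

definition bell_functional :: "int poly \<Rightarrow> int" where
  "bell_functional f = (\<Sum>i\<le>degree f. coeff f i * int (bell i))"

lemma bell_functional_altdef:
  "degree f \<le> N \<Longrightarrow> bell_functional f = (\<Sum>i\<le>N. coeff f i * int (bell i))"
  unfolding bell_functional_def by (rule sum.mono_neutral_left) (auto simp: coeff_eq_0)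

lemma bell_functional_add: "bell_functional (f + g) = bell_functional f + bell_functional g"
proof -
  define N where "N = max (degree f) (degree g)"
  have "degree (f + g) \<le> N"
    unfolding N_def by (rule degree_add_le) auto
  then show ?thesis
    using bell_functional_altdef[of f N] bell_functional_altdef[of g N]
      bell_functional_altdef[of "f + g" N]
    by (simp add: N_def sum.distrib algebra_simps)
qed

lemma bell_functional_smult: "bell_functional (smult c f) = c * bell_functional f"
  using bell_functional_altdef[of "smult c f" "degree f"]
  by (simp add: bell_functional_def sum_distrib_left algebra_simps)

lemma bell_functional_diff: "bell_functional (f - g) = bell_functional f - bell_functional g"
  using bell_functional_add[of f "-g"] bell_functional_smult[of "-1" g] by simp

lemma bell_functional_0 [simp]: "bell_functional 0 = 0"
  by (simp add: bell_functional_def)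

lemma bell_functional_sum: "bell_functional (\<Sum>i\<in>A. f i) = (\<Sum>i\<in>A. bell_functional (f i))"
  by (induction A rule: infinite_finite_induct) (simp_all add: bell_functional_add)

lemma bell_functional_monom: "bell_functional (monom c n) = c * int (bell n)"
proof -
  have "bell_functional (monom c n) = (\<Sum>i\<le>n. (if n = i then c else 0) * int (bell i))"
    using bell_functional_altdef[of "monom c n" n] by (simp add: degree_monom_le coeff_monom)
  also have "\<dots> = (\<Sum>i\<le>n. if i = n then c * int (bell i) else 0)"
    by (intro sum.cong) auto
  finally show ?thesis
    by simp
qed

lemma bell_functional_X_power: "bell_functional ([:0, 1:] ^ n) = int (bell n)"
  using bell_functional_monom[of 1 n] by (simp add: monom_altdef)

lemma pcompose_power: "pcompose (f ^ n) g = pcompose f g ^ n"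
  by (induction n) (simp_all add: pcompose_mult pcompose_1)

lemma bell_functional_one_plus_X_power: "bell_functional ([:1, 1:] ^ n) = int (bell (Suc n))"
proof -
  have "([:1, 1:] :: int poly) ^ n = ([:0, 1:] + 1) ^ n"
    by (simp add: one_pCons)
  also have "\<dots> = (\<Sum>k\<le>n. monom (of_nat (n choose k)) k)"
    by (simp add: binomial_ring monom_altdef of_nat_poly)
  finally show ?thesis
    by (simp add: bell_functional_sum bell_functional_monom bell_Suc)
qed

lemma bell_functional_monom_Suc:
  "bell_functional (monom c (Suc i)) = bell_functional (pcompose (monom c i) [:1, 1:])"
proof -
  have "bell_functional (monom c (Suc i)) = c * bell_functional ([:1, 1:] ^ i)"
    by (simp only: bell_functional_monom bell_functional_one_plus_X_power)
  also have "\<dots> = bell_functional (pcompose (monom c i) [:1, 1:])"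
    by (simp add: monom_altdef pcompose_smult pcompose_power bell_functional_smult pcompose_pCons)
  finally show ?thesis .
qed

lemma bell_functional_pCons_0: "bell_functional (pCons 0 f) = bell_functional (pcompose f [:1, 1:])"
proof -
  have "pCons 0 f = [:0, 1:] * (\<Sum>i\<le>degree f. monom (coeff f i) i)"
    by (simp add: poly_as_sum_of_monoms)
  also have "\<dots> = (\<Sum>i\<le>degree f. monom (coeff f i) (Suc i))"
    by (simp add: sum_distrib_left monom_Suc)
  finally have "bell_functional (pCons 0 f) =
      (\<Sum>i\<le>degree f. bell_functional (pcompose (monom (coeff f i) i) [:1, 1:]))"
    by (simp add: bell_functional_sum bell_functional_monom_Suc)
  also have "\<dots> = bell_functional (pcompose f [:1, 1:])"
    by (subst (2) poly_as_sum_of_monoms[symmetric]) (simp add: pcompose_sum bell_functional_sum)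
  finally show ?thesis .
qed

lemma bell_functional_linear_power_Suc:
  "bell_functional ([:c, 1:] ^ Suc n) =
     (\<Sum>k\<le>n. of_nat (n choose k) * bell_functional ([:c, 1:] ^ k)) + c * bell_functional ([:c, 1:] ^ n)"
proof -
  have "[:c, 1:] ^ Suc n = pCons 0 ([:c, 1:] ^ n) + smult c ([:c, 1:] ^ n)"
    by simp
  moreover have "pcompose ([:c, 1:] ^ n) [:1, 1:] = ([:c, 1:] + 1) ^ n"
    by (simp add: pcompose_power pcompose_pCons one_pCons)
  moreover have "([:c, 1:] + 1) ^ n = (\<Sum>k\<le>n. smult (of_nat (n choose k)) ([:c, 1:] ^ k))"
    by (simp add: binomial_ring of_nat_poly)
  ultimately show ?thesis
    by (simp add: bell_functional_add bell_functional_smult bell_functional_pCons_0 bell_functional_sum)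
qed

lemma sbell_eq_bell_functional: "sbell n s = of_int (bell_functional ([:s, 1:] ^ n))"
proof (induction n rule: less_induct)
  case (less n)
  show ?case
  proof (cases n)
    case 0
    then show ?thesis
      using bell_functional_X_power[of 0] by (simp add: sbell_0 bell_def)
  next
    case (Suc m)
    then show ?thesis
      using less bell_functional_linear_power_Suc[of s m] by (simp add: sbell_Suc)
  qed
qed

definition falling_poly :: "nat \<Rightarrow> int poly" where
  "falling_poly m = (\<Prod>j<m. [:- of_nat j, 1:])"

lemma falling_poly_Suc: "falling_poly (Suc m) = pCons 0 (pcompose (falling_poly m) [:-1, 1:])"
proof -
  have "falling_poly (Suc m) = [:0, 1:] * (\<Prod>j<m. [:- of_nat (Suc j), 1:])"
    unfolding falling_poly_def by (subst prod.lessThan_Suc_shift) simp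
  also have "(\<Prod>j<m. [:- of_nat (Suc j), 1:]) = pcompose (falling_poly m) [:-1, 1:]"
    unfolding falling_poly_def pcompose_prod
    by (intro prod.cong refl) (simp add: pcompose_pCons algebra_simps)
  finally show ?thesis
    by simp
qed

lemma degree_falling_poly: "degree (falling_poly m) = m"
  unfolding falling_poly_def by (subst degree_prod_sum_eq) auto

lemma lead_coeff_falling_poly: "lead_coeff (falling_poly m) = 1"
  unfolding falling_poly_def lead_coeff_prod by simp

lemma poly_falling_poly_eq_0: "k < m \<Longrightarrow> poly (falling_poly m) (int k) = 0"
  unfolding falling_poly_def poly_prod by (auto intro: prod_zero)

lemma bell_functional_falling_poly_mult:
  "bell_functional (falling_poly m * f) = bell_functional (pcompose f [:of_nat m, 1:])"
proof (induction m arbitrary: f)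
  case 0
  then show ?case
    by (simp add: falling_poly_def)
next
  case (Suc m)
  have "pcompose (pcompose (falling_poly m) [:-1, 1:]) [:1, 1:] = falling_poly m"
    by (simp add: pcompose_assoc[symmetric] pcompose_pCons)
  then have "bell_functional (falling_poly (Suc m) * f) = bell_functional (falling_poly m * pcompose f [:1, 1:])"
    by (simp add: falling_poly_Suc bell_functional_pCons_0 pcompose_mult)
  also have "\<dots> = bell_functional (pcompose (pcompose f [:1, 1:]) [:of_nat m, 1:])"
    by (rule Suc.IH)
  also have "\<dots> = bell_functional (pcompose f [:of_nat (Suc m), 1:])"
    by (simp add: pcompose_assoc[symmetric] pcompose_pCons algebra_simps)
  finally show ?case .
qed

definition bell_cong :: "nat \<Rightarrow> int poly \<Rightarrow> int poly \<Rightarrow> bool" where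
  "bell_cong p f g \<longleftrightarrow> (\<forall>h. [bell_functional (h * f) = bell_functional (h * g)] (mod int p))"

lemma bell_cong_refl: "bell_cong p f f"
  by (simp add: bell_cong_def)

lemma bell_cong_trans: "bell_cong p f g \<Longrightarrow> bell_cong p g k \<Longrightarrow> bell_cong p f k"
  unfolding bell_cong_def by (blast intro: cong_trans)

lemma bell_cong_add: "bell_cong p f g \<Longrightarrow> bell_cong p f' g' \<Longrightarrow> bell_cong p (f + f') (g + g')"
  unfolding bell_cong_def by (simp add: distrib_left bell_functional_add cong_add)

lemma bell_cong_mult_right: "bell_cong p f g \<Longrightarrow> bell_cong p (f * k) (g * k)"
  unfolding bell_cong_def
proof (intro allI)
  fix h
  assume "\<forall>h. [bell_functional (h * f) = bell_functional (h * g)] (mod int p)"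
  then have "[bell_functional ((h * k) * f) = bell_functional ((h * k) * g)] (mod int p)"
    by blast
  then show "[bell_functional (h * (f * k)) = bell_functional (h * (g * k))] (mod int p)"
    by (simp only: mult.assoc mult.commute[of k])
qed

lemma bell_cong_mult: "bell_cong p f g \<Longrightarrow> bell_cong p f' g' \<Longrightarrow> bell_cong p (f * f') (g * g')"
  by (metis bell_cong_mult_right bell_cong_trans mult.commute)

lemma bell_cong_power: "bell_cong p f g \<Longrightarrow> bell_cong p (f ^ n) (g ^ n)"
  by (induction n) (simp_all add: bell_cong_refl bell_cong_mult)

lemma bell_cong_prod:
  "(\<And>k. k \<in> A \<Longrightarrow> bell_cong p (f k) (g k)) \<Longrightarrow> bell_cong p (\<Prod>k\<in>A. f k) (\<Prod>k\<in>A. g k)"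
  by (induction A rule: infinite_finite_induct) (simp_all add: bell_cong_refl bell_cong_mult)

lemma bell_cong_if_dvd: "[:int p:] dvd f - g \<Longrightarrow> bell_cong p f g"
  unfolding bell_cong_def cong_iff_dvd_diff
  by (auto elim!: dvdE simp: bell_functional_smult simp flip: bell_functional_diff right_diff_distrib)

lemma bell_cong_pcompose_left: "bell_cong p f g \<Longrightarrow> bell_cong p (pcompose h f) (pcompose h g)"
  by (induction h) (simp_all add: pcompose_pCons bell_cong_refl bell_cong_add bell_cong_mult)

text \<open>Write \<open>h = k(x+1)\<close>; then \<open>L(h f(x+1)) = L((k f)(x+1)) = L(x k f)\<close>.\<close>
lemma bell_cong_pcompose_Suc:
  assumes "bell_cong p f g"
  shows "bell_cong p (pcompose f [:1, 1:]) (pcompose g [:1, 1:])"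
  unfolding bell_cong_def
proof
  fix h :: "int poly"
  define k where "k = pcompose h [:-1, 1:]"
  have h: "h = pcompose k [:1, 1:]"
    by (simp add: k_def pcompose_assoc[symmetric] pcompose_pCons)
  have "bell_functional (h * pcompose f' [:1, 1:]) = bell_functional ([:0, 1:] * k * f')" for f'
    using bell_functional_pCons_0[of "k * f'"] by (simp add: h pcompose_mult)
  then show "[bell_functional (h * pcompose f [:1, 1:]) = bell_functional (h * pcompose g [:1, 1:])] (mod int p)"
    using assms unfolding bell_cong_def by metis
qed

lemma bell_cong_pcompose_linear_nat:
  "bell_cong p f g \<Longrightarrow> bell_cong p (pcompose f [:of_nat m, 1:]) (pcompose g [:of_nat m, 1:])"
proof (induction m)
  case 0
  then show ?case
    by simp
next
  case (Suc m)
  have shift: "\<And>f. pcompose f [:of_nat (Suc m), 1:] = pcompose (pcompose f [:of_nat m, 1:]) [:1, 1:]"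
    by (simp add: pcompose_assoc[symmetric] pcompose_pCons algebra_simps)
  show ?case
    unfolding shift using Suc by (intro bell_cong_pcompose_Suc) simp
qed

text \<open>Substituting \<open>x + c\<close> or \<open>x + (c mod p)\<close> gives polynomials that agree coefficientwise
  mod \<open>p\<close>; this reduces negative shifts to nonnegative ones.\<close>
lemma bell_cong_pcompose_linear:
  assumes "p > 0" "bell_cong p f g"
  shows "bell_cong p (pcompose f [:c, 1:]) (pcompose g [:c, 1:])"
proof -
  define c' where "c' = nat (c mod int p)"
  have c': "int c' = c mod int p"
    unfolding c'_def using assms(1) by simp
  have "int p dvd c - int c'"
    unfolding c' by (rule dvd_minus_mod)
  then have "bell_cong p [:c, 1:] [:int c', 1:]" "bell_cong p [:int c', 1:] [:c, 1:]"
    by (auto intro!: bell_cong_if_dvd simp: dvd_diff_commute)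
  then have "bell_cong p (pcompose f [:c, 1:]) (pcompose f [:int c', 1:])"
      "bell_cong p (pcompose g [:int c', 1:]) (pcompose g [:c, 1:])"
    by (simp_all add: bell_cong_pcompose_left)
  moreover have "bell_cong p (pcompose f [:int c', 1:]) (pcompose g [:int c', 1:])"
    using assms(2) by (rule bell_cong_pcompose_linear_nat)
  ultimately show ?thesis
    by (blast intro: bell_cong_trans)
qed

lemma fermat_little:
  fixes a :: nat
  assumes "prime p"
  shows "[a ^ p = a] (mod p)"
proof (cases "p dvd a")
  case True
  moreover have "a dvd a ^ p"
    using prime_gt_0_nat[OF assms] by simp
  ultimately show ?thesis
    by (simp add: cong_def dvd_imp_mod_0 dvd_trans[of p a])
next
  case False
  then have "[a ^ (p - 1) * a = 1 * a] (mod p)"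
    by (intro cong_mult fermat_theorem[OF assms]) simp_all
  then show ?thesis
    using prime_gt_0_nat[OF assms] by (simp flip: power_Suc2)
qed

lemma const_prime_dvd_poly_if_roots_mod:
  fixes D :: "int poly"
  assumes "prime p" and "finite A"
    and "\<forall>a\<in>A. \<forall>b\<in>A. a \<noteq> b \<longrightarrow> \<not> int p dvd a - b"
    and "degree D < card A" and "\<forall>a\<in>A. int p dvd poly D a"
  shows "[:int p:] dvd D"
  using assms(2-)
proof (induction A arbitrary: D rule: finite_induct)
  case empty
  then show ?case
    by simp
next
  case (insert a A)
  show ?case
  proof (cases "degree D = 0")
    case True
    then obtain c where "D = [:c:]"
      by (elim degree_eq_zeroE)
    moreover have "int p dvd poly D a"
      using insert.prems(3) by simp
    ultimately show ?thesis
      by simp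
  next
    case False
    define Q where "Q = synthetic_div D a"
    have D: "D = [:-a, 1:] * Q + [:poly D a:]"
      unfolding Q_def by (rule synthetic_div_correct'[symmetric])
    have "int p dvd poly Q b" if "b \<in> A" for b
    proof -
      have "poly D b = (b - a) * poly Q b + poly D a"
        by (subst D) (simp add: algebra_simps)
      then have "int p dvd (b - a) * poly Q b"
        using insert.prems(3) \<open>b \<in> A\<close> by (metis dvd_add_left_iff insert_iff)
      moreover have "b \<noteq> a"
        using insert.hyps(2) \<open>b \<in> A\<close> by blast
      then have "\<not> int p dvd b - a"
        using insert.prems(1) \<open>b \<in> A\<close> by simp
      ultimately show ?thesis
        using \<open>prime p\<close> by (simp add: prime_dvd_mult_iff)
    qed
    moreover have "degree Q < card A"
      using insert.prems(2) insert.hyps False by (simp add: Q_def degree_synthetic_div)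
    ultimately have "[:int p:] dvd Q"
      using insert.IH insert.prems(1) by blast
    moreover have "[:int p:] dvd [:poly D a:]"
      using insert.prems(3) by simp
    ultimately have "[:int p:] dvd [:-a, 1:] * Q + [:poly D a:]"
      by (intro dvd_add dvd_mult)
    then show ?thesis
      by (simp only: D[symmetric])
  qed
qed

lemma falling_poly_prime_cong:
  assumes p: "prime p"
  shows "[:int p:] dvd [:0, 1:] ^ p - [:0, 1:] - falling_poly p"
proof (rule const_prime_dvd_poly_if_roots_mod[where A = "int ` {..<p}"])
  from p have "p \<ge> 2"
    by (rule prime_ge_2_nat)
  show "\<forall>a\<in>int ` {..<p}. \<forall>b\<in>int ` {..<p}. a \<noteq> b \<longrightarrow> \<not> int p dvd a - b"
    by (auto simp: cong_int_iff simp flip: cong_iff_dvd_diff dest: cong_less_modulus_unique_nat)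
  have "degree ([:0, 1:] ^ p - [:0, 1:] - falling_poly p) < p"
  proof (rule degree_lessI)
    show "\<forall>k\<ge>p. coeff ([:0, 1:] ^ p - [:0, 1:] - falling_poly p) k = 0"
    proof (intro allI impI)
      fix k assume "p \<le> k"
      then have "coeff (falling_poly p) k = (if k = p then 1 else 0)"
        using degree_falling_poly[of p] lead_coeff_falling_poly[of p] by (auto simp: coeff_eq_0)
      with \<open>p \<le> k\<close> \<open>p \<ge> 2\<close> show "coeff ([:0, 1:] ^ p - [:0, 1:] - falling_poly p) k = 0"
        by (simp add: coeff_pCons monom_altdef[symmetric] split: nat.split)
    qed
  qed (use \<open>p \<ge> 2\<close> in simp)
  then show "degree ([:0, 1:] ^ p - [:0, 1:] - falling_poly p) < card (int ` {..<p})"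
    by (simp add: card_image)
  show "\<forall>a\<in>int ` {..<p}. int p dvd poly ([:0, 1:] ^ p - [:0, 1:] - falling_poly p) a"
  proof
    fix a assume "a \<in> int ` {..<p}"
    then obtain k where "a = int k" "k < p"
      by auto
    moreover have "int p dvd int k ^ p - int k"
      using fermat_little[OF p, of k] by (simp add: cong_iff_dvd_diff flip: cong_int_iff)
    ultimately show "int p dvd poly ([:0, 1:] ^ p - [:0, 1:] - falling_poly p) a"
      by (simp add: poly_falling_poly_eq_0)
  qed
qed (use p in auto)

lemma bell_cong_X_power_prime:
  assumes p: "prime p"
  shows "bell_cong p ([:0, 1:] ^ p) [:1, 1:]"
proof -
  have "bell_cong p (falling_poly p) 1"
    unfolding bell_cong_def
  proof
    fix h
    have "bell_cong p (pcompose h [:int p, 1:]) (pcompose h [:0, 1:])"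
      by (intro bell_cong_pcompose_left bell_cong_if_dvd) simp
    then have "[bell_functional (pcompose h [:int p, 1:]) = bell_functional h] (mod int p)"
      unfolding bell_cong_def by (metis mult_1 pcompose_idR)
    then show "[bell_functional (h * falling_poly p) = bell_functional (h * 1)] (mod int p)"
      using bell_functional_falling_poly_mult[of p h] by (simp add: mult.commute)
  qed
  moreover have "bell_cong p ([:0, 1:] ^ p - [:0, 1:]) (falling_poly p)"
    using falling_poly_prime_cong[OF p] by (rule bell_cong_if_dvd)
  ultimately have "bell_cong p ([:0, 1:] ^ p - [:0, 1:] + [:0, 1:]) (1 + [:0, 1:])"
    by (blast intro: bell_cong_trans bell_cong_add bell_cong_refl)
  then show ?thesis
    by (simp add: one_pCons)
qed

lemma bell_cong_linear_power_prime:
  assumes "prime p"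
  shows "bell_cong p ([:c, 1:] ^ p) [:c + 1, 1:]"
proof -
  have "bell_cong p (pcompose ([:0, 1:] ^ p) [:c, 1:]) (pcompose [:1, 1:] [:c, 1:])"
    using assms by (intro bell_cong_pcompose_linear bell_cong_X_power_prime prime_gt_0_nat)
  then show ?thesis
    by (simp add: pcompose_power pcompose_pCons algebra_simps)
qed

lemma bell_cong_linear_power_prime_power:
  assumes "prime p"
  shows "bell_cong p ([:c, 1:] ^ (p ^ k)) [:c + of_nat k, 1:]"
proof (induction k)
  case 0
  then show ?case
    by (simp add: bell_cong_refl)
next
  case (Suc k)
  have "[:c, 1:] ^ (p ^ Suc k) = ([:c, 1:] ^ (p ^ k)) ^ p"
    by (simp add: power_mult[symmetric] mult.commute)
  moreover have "bell_cong p (([:c, 1:] ^ (p ^ k)) ^ p) ([:c + of_nat k, 1:] ^ p)"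
    using Suc.IH by (rule bell_cong_power)
  moreover have "bell_cong p ([:c + of_nat k, 1:] ^ p) [:c + of_nat k + 1, 1:]"
    using assms by (rule bell_cong_linear_power_prime)
  ultimately show ?case
    by (auto intro: bell_cong_trans simp: algebra_simps)
qed

lemma bell_cong_linear_power_sum_prime_powers:
  assumes "prime p"
  shows "bell_cong p ([:c, 1:] ^ (\<Sum>k=1..r. p ^ k)) (\<Prod>k=1..r. [:c + of_nat k, 1:])"
  unfolding power_sum using assms by (intro bell_cong_prod bell_cong_linear_power_prime_power)

lemma prod_linear_eq_falling_poly: "(\<Prod>k=1..r. [:- int r + of_nat k, 1:]) = falling_poly r"
  unfolding falling_poly_def
  by (rule prod.reindex_bij_witness[where i = "\<lambda>k. r - k" and j = "\<lambda>j. r - j"]) auto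

theorem corollary4:
  fixes p r n :: nat
  assumes "prime p"
    and "n \<ge> (\<Sum>k=1..r. p ^ k)"
  shows "(of_nat (bell (n - (\<Sum>k=1..r. p ^ k))) - sbell n (- int r)) / of_nat p \<in> \<int>"
proof -
  define S where "S = (\<Sum>k=1..r. p ^ k)"
  define m where "m = n - S"
  let ?x = "[:- int r, 1:]"
  have "bell_cong p (?x ^ S) (falling_poly r)"
    unfolding S_def prod_linear_eq_falling_poly[symmetric]
    using assms(1) by (rule bell_cong_linear_power_sum_prime_powers)
  then have "[bell_functional (?x ^ m * ?x ^ S) = bell_functional (?x ^ m * falling_poly r)] (mod int p)"
    unfolding bell_cong_def by blast
  moreover have "?x ^ m * ?x ^ S = ?x ^ n"
    using assms(2) by (simp add: m_def S_def flip: power_add)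
  moreover have "bell_functional (?x ^ m * falling_poly r) = int (bell m)"
    using bell_functional_falling_poly_mult[of r "?x ^ m"]
    by (simp add: mult.commute pcompose_power pcompose_pCons bell_functional_X_power)
  ultimately have "int p dvd int (bell m) - bell_functional (?x ^ n)"
    by (simp add: cong_sym_eq cong_iff_dvd_diff)
  then have "of_int (int (bell m) - bell_functional (?x ^ n)) / of_int (int p) \<in> (\<int> :: rat set)"
    by (rule of_int_divide_in_Ints)
  then show ?thesis
    by (simp add: sbell_eq_bell_functional m_def S_def)
qed

end
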